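(* Let $d_{2,P}(t,x)=x^4+2t^2x^2-8t^2x+t^4-t(4x^3-4t^2x+4t^2)$. If $t_0,x_0\in\mathbb Z$ satisfy $d_{2,P}(t_0,x_0)=0$, then for some $n\in\mathbb Z$, $t_0$ is given by one of the following: (1) $t_0=64(u v^3+3v^4)$ with $u=\frac{(1+\sqrt2)^{2n}+(1-\sqrt2)^{2n}}{2}$, $v=\frac{(1+\sqrt2)^{2n}-(1-\sqrt2)^{2n}}{4\sqrt2}$; (2) $t_0=4(uv^3+3v^4)$ with $u=(1+\sqrt2)^{2n+1}+(1-\sqrt2)^{2n+1}$, $v=\frac{(1+\sqrt2)^{2n+1}-(1-\sqrt2)^{2n+1}}{2\sqrt2}$; (3) $t_0=uv^3+3v^4$ with $u=\sqrt2\big((1+\sqrt2)^{2n+1}-(1-\sqrt2)^{2n+1}\big)$, $v=\frac{(1+\sqrt2)^{2n+1}+(1-\sqrt2)^{2n+1}}{2}$; (4) $t_0=uv^3+3v^4$ with $u=\sqrt2\big((1+\sqrt2)^{2n}-(1-\sqrt2)^{2n}\big)$, $v=\frac{(1+\sqrt2)^{2n}+(1-\sqrt2)^{2n}}{2}$. *)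

theory Defs
  imports Complex_Main
begin

definition d2P :: "int \<Rightarrow> int \<Rightarrow> int" where
  "d2P t x = x^4 + 2*t^2*x^2 - 8*t^2*x + t^4 - t*(4*x^3 - 4*t^2*x + 4*t^2)"

abbreviation alpha :: real where "alpha \<equiv> 1 + sqrt 2"
abbreviation beta :: real where "beta \<equiv> 1 - sqrt 2"

end

theory Submission
  imports Defs
begin

text \<open>Since d2P t x = (x^2 - 2tx - t^2)^2 - (2t)^2 (2x + t), a root with t \<noteq> 0 forces
2x + t = s^2 and x^2 - 2tx - t^2 = 2ts. Eliminating x leaves a quadratic in t whose discriminant
is a square exactly when m = 2s + 3 solves the Pell equation m^2 - 2w^2 = 1, and then
4t = (m - 3)(3m - 1 + 4w). The Pell solutions are m + w sqrt 2 = \<plusminus>alpha^(2k). Writing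
alpha^(-k-1) = P + Q sqrt 2, a unit of norm \<plusminus>1, turns this into
m + w sqrt 2 = \<plusminus>(P - Q sqrt 2)^2 beta^2, and the product then factors as
t = 8PQ^3 + 12Q^4 or t = 4QP^3 + 3P^4. Finally P and Q are read off from alpha^j \<plusminus> beta^j,
which gives the four families according to the parity of j = -k-1.\<close>

lemma square_eq_square_mult_imp_square:
  fixes A c N :: "'a :: ring_gcd"
  assumes "A^2 = c^2 * N" "c \<noteq> 0"
  shows "\<exists>s. A = c*s \<and> N = s^2"
proof -
  have "c dvd A" using assms(1) by (metis dvd_triv_left pow_divides_pow_iff zero_less_numeral)
  then obtain s where s: "A = c*s" ..
  with assms have "N = s^2" by (simp add: power_mult_distrib)
  with s show ?thesis by blast
qed

lemma power_int_minus_even_if_mult_eq_minus_one: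
  fixes x y :: "'a :: field"
  assumes "x * y = -1"
  shows "x powi (-(2*k)) = y powi (2*k)"
proof -
  have "x powi (2*k) * y powi (2*k) = 1"
    using assms by (simp flip: power_int_mult_distrib)
  then show ?thesis by (simp add: power_int_minus inverse_unique)
qed

lemma power_int_diff_one_if_mult_eq_minus_one:
  fixes x y :: "'a :: field"
  assumes "x * y = -1"
  shows "x powi (i - 1) = - (x powi i * y)"
proof -
  have "x \<noteq> 0" using assms by auto
  then have "x powi i = x powi (i - 1) * x" using power_int_add_1[of x "i - 1"] by simp
  then show ?thesis using assms by (simp add: mult.assoc)
qed

lemma d2P_as_difference: "d2P t x = (x^2 - 2*t*x - t^2)^2 - (2*t)^2 * (2*x + t)"
  unfolding d2P_def by algebra

lemma d2P_root_imp_pell: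
  assumes "d2P t x = 0"
  shows "\<exists>m w. m^2 - 2*w^2 = 1 \<and> 4*t = (m - 3)*(3*m - 1 + 4*w)"
proof (cases "t = 0")
  case True
  then show ?thesis by (intro exI[of _ 3] exI[of _ 2]) simp
next
  case False
  have "(x^2 - 2*t*x - t^2)^2 = (2*t)^2 * (2*x + t)"
    using assms by (simp add: d2P_as_difference)
  then obtain s where s1: "x^2 - 2*t*x - t^2 = 2*t*s" and s2: "2*x + t = s^2"
    using square_eq_square_mult_imp_square False by fastforce
  have quartic: "s^4 - 6*t*s^2 + t^2 = 8*t*s"
  proof -
    have "4*(2*t*s) = (2*x)^2 - 4*t*(2*x) - 4*t^2" using s1 by algebra
    also have "\<dots> = (s^2 - t)^2 - 4*t*(s^2 - t) - 4*t^2" using s2 by algebra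
    finally show ?thesis by algebra
  qed
  define m where "m = 2*s + 3"
  have "s \<noteq> 0" using quartic False by auto
  moreover have "(t - 3*s^2 - 4*s)^2 = s^2 * (2*(m^2 - 1))"
    unfolding m_def using quartic by algebra
  ultimately obtain y where y1: "t - 3*s^2 - 4*s = s*y" and y2: "2*(m^2 - 1) = y^2"
    using square_eq_square_mult_imp_square by blast
  have "even y" using y2 by (metis dvd_triv_left even_power)
  then obtain w where w: "y = 2*w" ..
  have "m^2 - 2*w^2 = 1" using y2 w by algebra
  moreover have "4*t = (m - 3)*(3*m - 1 + 4*w)" using y1 w unfolding m_def by algebra
  ultimately show ?thesis by blast
qed

lemma alpha_mult_beta: "alpha * beta = -1"
  by (simp add: algebra_simps)

lemma beta_mult_alpha: "beta * alpha = -1"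
  by (simp add: algebra_simps)

lemma nonneg_unit_eq_alpha_power:
  fixes a b :: int
  assumes "a \<ge> 0" "b \<ge> 0" "a^2 - 2*b^2 = 1 \<or> a^2 - 2*b^2 = -1"
  shows "\<exists>n. a + b * sqrt 2 = alpha^n \<and> a - b * sqrt 2 = beta^n"
  using assms
proof (induction "nat b" arbitrary: a b rule: less_induct)
  case less
  show ?case
  proof (cases "b = 0")
    case True
    then have "a = 1" using less.prems zero_le_power2[of a] by (auto simp: power2_eq_1_iff)
    with True show ?thesis by (intro exI[of _ 0]) simp
  next
    case False
    with less.prems have "b \<ge> 1" by simp
    then have "1 \<le> b^2" by (simp add: one_le_power)
    then have "b^2 \<le> a^2" using less.prems(3) by linarith
    then have "b \<le> a" using less.prems(1) by (rule power2_le_imp_le)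
    have "a^2 < 4*b^2" using less.prems(3) \<open>1 \<le> b^2\<close> by linarith
    then have "a^2 < (2*b)^2" by (simp add: power_mult_distrib)
    then have "a < 2*b" by (rule power2_less_imp_less) (use less.prems(2) in simp)
    \<comment> \<open>dividing a + b sqrt 2 by alpha lowers b and keeps both coordinates nonnegative\<close>
    define a' b' where "a' = 2*b - a" and "b' = a - b"
    have "a'^2 - 2*b'^2 = -(a^2 - 2*b^2)" unfolding a'_def b'_def by algebra
    then have "a'^2 - 2*b'^2 = 1 \<or> a'^2 - 2*b'^2 = -1" using less.prems(3) by linarith
    moreover have "nat b' < nat b" "a' \<ge> 0" "b' \<ge> 0"
      using \<open>b \<le> a\<close> \<open>a < 2*b\<close> unfolding a'_def b'_def by auto
    ultimately obtain n where n: "a' + b' * sqrt 2 = alpha^n" "a' - b' * sqrt 2 = beta^n"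
      using less.hyps by blast
    have "a + b * sqrt 2 = (a' + b' * sqrt 2) * alpha"
         "a - b * sqrt 2 = (a' - b' * sqrt 2) * beta"
      unfolding a'_def b'_def by (simp_all add: algebra_simps)
    with n show ?thesis by (intro exI[of _ "Suc n"]) (simp add: mult.commute)
  qed
qed

lemma pell_solution_eq_alpha_powi:
  fixes m w :: int
  assumes "m^2 - 2*w^2 = 1"
  shows "\<exists>(\<sigma>::int) k. (\<sigma> = 1 \<or> \<sigma> = -1) \<and>
    m + w * sqrt 2 = \<sigma> * alpha powi (2*k) \<and> m - w * sqrt 2 = \<sigma> * beta powi (2*k)"
proof -
  obtain n where n: "\<bar>m\<bar> + \<bar>w\<bar> * sqrt 2 = alpha^n" "\<bar>m\<bar> - \<bar>w\<bar> * sqrt 2 = beta^n"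
    using nonneg_unit_eq_alpha_power[of "\<bar>m\<bar>" "\<bar>w\<bar>"] assms by auto
  have "(alpha * beta)^n = (\<bar>m\<bar> + \<bar>w\<bar> * sqrt 2) * (\<bar>m\<bar> - \<bar>w\<bar> * sqrt 2)"
    by (simp only: power_mult_distrib flip: n)
  also have "\<dots> = of_int (m^2 - 2*w^2)" by (simp add: algebra_simps power2_eq_square)
  finally have "(-1::real)^n = 1" using assms by (simp add: alpha_mult_beta)
  then obtain k0 where "n = 2*k0" by (metis evenE neg_one_odd_power one_neq_neg_one)
  have powi_k0: "x powi (2 * int k0) = x ^ n" for x :: real
    by (metis \<open>n = 2*k0\<close> of_nat_mult of_nat_numeral power_int_of_nat)
  have any_sign: "\<exists>k. \<bar>m\<bar> + v * sqrt 2 = alpha powi (2*k) \<and> \<bar>m\<bar> - v * sqrt 2 = beta powi (2*k)"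
    if "\<bar>v\<bar> = \<bar>w\<bar>" for v :: int
  proof (cases "v \<ge> 0")
    case True
    with that n show ?thesis by (intro exI[of _ "int k0"]) (simp add: powi_k0)
  next
    case False
    have "alpha powi (-(2 * int k0)) = beta^n" "beta powi (-(2 * int k0)) = alpha^n"
      by (simp_all only: power_int_minus_even_if_mult_eq_minus_one[OF alpha_mult_beta]
          power_int_minus_even_if_mult_eq_minus_one[OF beta_mult_alpha] powi_k0)
    moreover have "real_of_int v = - \<bar>real_of_int w\<bar>"
      using that False by linarith
    ultimately show ?thesis
      by (intro exI[of _ "- int k0"]) (simp only: mult_minus_right, simp flip: n)
  qed
  have "m \<noteq> 0"
    using assms zero_le_power2[of w] by (intro notI) simp
  then obtain k where k: "\<bar>m\<bar> + of_int (sgn m * w) * sqrt 2 = alpha powi (2*k)"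
    "\<bar>m\<bar> - of_int (sgn m * w) * sqrt 2 = beta powi (2*k)"
    using any_sign[of "sgn m * w"] by (auto simp: abs_mult)
  show ?thesis
  proof (cases "m > 0")
    case True
    with k show ?thesis by (intro exI[of _ 1] exI[of _ k]) simp
  next
    case False
    with \<open>m \<noteq> 0\<close> k show ?thesis
      by (intro exI[of _ "-1"] exI[of _ k]) (auto simp: algebra_simps)
  qed
qed

lemma alpha_beta_powi_coords:
  "\<exists>(P::int) (Q::int). alpha powi j = P + Q * sqrt 2 \<and> beta powi j = P - Q * sqrt 2"
proof (induction j rule: int_induct[where k = 0])
  case base
  show ?case by (intro exI[of _ 1] exI[of _ 0]) simp
next
  case (step1 i)
  then obtain P Q :: int where PQ: "alpha powi i = P + Q * sqrt 2" "beta powi i = P - Q * sqrt 2"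
    by blast
  have "alpha \<noteq> 0" "beta \<noteq> 0" using alpha_mult_beta by auto
  then have "alpha powi (i + 1) = (P + 2*Q) + (P + Q) * sqrt 2"
       "beta powi (i + 1) = (P + 2*Q) - (P + Q) * sqrt 2"
    by (simp_all only: power_int_add_1 simp_thms) (simp_all add: PQ algebra_simps)
  then show ?case by (metis of_int_add of_int_mult of_int_numeral)
next
  case (step2 i)
  then obtain P Q :: int where PQ: "alpha powi i = P + Q * sqrt 2" "beta powi i = P - Q * sqrt 2"
    by blast
  have "alpha powi (i - 1) = (2*Q - P) + (P - Q) * sqrt 2"
       "beta powi (i - 1) = (2*Q - P) - (P - Q) * sqrt 2"
    by (simp_all add: power_int_diff_one_if_mult_eq_minus_one[OF alpha_mult_beta] power_int_diff_one_if_mult_eq_minus_one[OF beta_mult_alpha]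
        PQ algebra_simps)
  then show ?case by (metis of_int_diff of_int_mult of_int_numeral)
qed

lemma alpha_beta_coords_norm:
  fixes P Q :: int
  assumes "alpha powi j = P + Q * sqrt 2" "beta powi j = P - Q * sqrt 2"
  shows "P^2 - 2*Q^2 = 1 \<or> P^2 - 2*Q^2 = -1"
proof -
  have "of_int (P^2 - 2*Q^2) = alpha powi j * beta powi j"
    by (simp add: assms algebra_simps power2_eq_square)
  also have "\<dots> = (-1) powi j" by (simp add: alpha_mult_beta flip: power_int_mult_distrib)
  finally have "real_of_int (P^2 - 2*Q^2) = (-1) powi j" .
  then have "real_of_int (P^2 - 2*Q^2) = 1 \<or> real_of_int (P^2 - 2*Q^2) = -1"
    by (cases "even j") auto
  then show ?thesis by (metis of_int_eq_iff of_int_1 of_int_minus)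
qed

lemma pell_solution_coords:
  fixes m w \<sigma> P Q :: int
  assumes "m + w * sqrt 2 = \<sigma> * alpha powi (2*k)" "m - w * sqrt 2 = \<sigma> * beta powi (2*k)"
    and "alpha powi (-k-1) = P + Q * sqrt 2" "beta powi (-k-1) = P - Q * sqrt 2"
  shows "m = \<sigma> * (3*P^2 + 6*Q^2 + 8*P*Q) \<and> w = -\<sigma> * (2*P^2 + 4*Q^2 + 6*P*Q)"
proof -
  define A B where "A = 3*P^2 + 6*Q^2 + 8*P*Q" and "B = 2*P^2 + 4*Q^2 + 6*P*Q"
  have "x powi (2*k) = (y powi (-k-1))^2 * y^2" if "y * x = -1" for x y :: real
  proof -
    have "y \<noteq> 0" using that by auto
    have "x powi (2*k) = y powi ((-k-1)*2 + 2)"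
      using power_int_minus_even_if_mult_eq_minus_one[OF that, of k] by (simp add: mult.commute)
    also have "\<dots> = y powi ((-k-1)*2) * y powi 2"
      using \<open>y \<noteq> 0\<close> by (rule power_int_add[OF disjI1])
    also have "\<dots> = (y powi (-k-1))^2 * y^2"
      by (simp only: power_int_power' power_int_numeral of_nat_numeral)
    finally show ?thesis .
  qed
  then have "alpha powi (2*k) = (P - Q * sqrt 2)^2 * (1 - sqrt 2)^2"
    "beta powi (2*k) = (P + Q * sqrt 2)^2 * (1 + sqrt 2)^2"
    using assms(3,4) alpha_mult_beta beta_mult_alpha by simp_all
  moreover have "(P - Q * sqrt 2)^2 * (1 - sqrt 2)^2 = A - B * sqrt 2"
    "(P + Q * sqrt 2)^2 * (1 + sqrt 2)^2 = A + B * sqrt 2"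
    unfolding A_def B_def by (simp_all add: power2_eq_square algebra_simps)
  ultimately have "m + w * sqrt 2 = \<sigma> * (A - B * sqrt 2)" "m - w * sqrt 2 = \<sigma> * (A + B * sqrt 2)"
    using assms(1,2) by simp_all
  then have "real_of_int m = of_int (\<sigma> * A)" "real_of_int (w + \<sigma> * B) * sqrt 2 = 0"
    by (simp_all add: algebra_simps)
  then have "m = \<sigma> * A" "w + \<sigma> * B = 0"
    by (simp_all only: of_int_eq_iff mult_eq_0_iff of_int_eq_0_iff) simp
  then show ?thesis unfolding A_def B_def by simp
qed

lemma pell_factor_eq_quartic:
  fixes m w \<sigma> P Q :: int
  assumes "\<sigma> = 1 \<or> \<sigma> = -1" "P^2 - 2*Q^2 = 1 \<or> P^2 - 2*Q^2 = -1"
    and "m = \<sigma> * (3*P^2 + 6*Q^2 + 8*P*Q)" "w = -\<sigma> * (2*P^2 + 4*Q^2 + 6*P*Q)"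
  shows "(m - 3)*(3*m - 1 + 4*w) = 4*(8*P*Q^3 + 12*Q^4)
       \<or> (m - 3)*(3*m - 1 + 4*w) = 4*(4*Q*P^3 + 3*P^4)"
proof -
  have "\<sigma>^2 = 1" using assms(1) by auto
  moreover have "\<sigma> * (P^2 - 2*Q^2) = 1 \<or> \<sigma> * (P^2 - 2*Q^2) = -1" using assms(1,2) by auto
  ultimately show ?thesis using assms(3,4) by (elim disjE) (rule disjI1, algebra, rule disjI2, algebra)
qed

lemma sqrt2_conj_sum_diff:
  fixes a b :: real
  assumes "a = P + Q * sqrt 2" "b = P - Q * sqrt 2"
  shows "a + b = 2 * P" "(a + b) / 2 = P" "(a - b) / (2 * sqrt 2) = Q"
    "(a - b) / (4 * sqrt 2) = Q / 2" "sqrt 2 * (a - b) = 4 * Q"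
  by (simp_all add: assms field_simps)

lemma even_exponent_families:
  fixes P Q t :: int
  assumes "alpha powi (2*n) = P + Q * sqrt 2" "beta powi (2*n) = P - Q * sqrt 2"
    and "t = 8*P*Q^3 + 12*Q^4 \<or> t = 4*Q*P^3 + 3*P^4"
  shows "(let u = (alpha powi (2*n) + beta powi (2*n)) / 2;
              v = (alpha powi (2*n) - beta powi (2*n)) / (4 * sqrt 2)
          in real_of_int t = 64 * (u * v^3 + 3 * v^4))
       \<or> (let u = sqrt 2 * (alpha powi (2*n) - beta powi (2*n));
              v = (alpha powi (2*n) + beta powi (2*n)) / 2
          in real_of_int t = u * v^3 + 3 * v^4)"
  unfolding Let_def sqrt2_conj_sum_diff[OF assms(1,2)] using assms(3) by (auto simp: power_divide)

lemma odd_exponent_families: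
  fixes P Q t :: int
  assumes "alpha powi (2*n+1) = P + Q * sqrt 2" "beta powi (2*n+1) = P - Q * sqrt 2"
    and "t = 8*P*Q^3 + 12*Q^4 \<or> t = 4*Q*P^3 + 3*P^4"
  shows "(let u = alpha powi (2*n+1) + beta powi (2*n+1);
              v = (alpha powi (2*n+1) - beta powi (2*n+1)) / (2 * sqrt 2)
          in real_of_int t = 4 * (u * v^3 + 3 * v^4))
       \<or> (let u = sqrt 2 * (alpha powi (2*n+1) - beta powi (2*n+1));
              v = (alpha powi (2*n+1) + beta powi (2*n+1)) / 2
          in real_of_int t = u * v^3 + 3 * v^4)"
  unfolding Let_def sqrt2_conj_sum_diff[OF assms(1,2)] using assms(3) by auto

theorem proposition4p7:
  fixes t0 x0 :: int
  assumes "d2P t0 x0 = 0"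
  shows "\<exists>n::int.
    (let u = (alpha powi (2*n) + beta powi (2*n)) / 2;
         v = (alpha powi (2*n) - beta powi (2*n)) / (4 * sqrt 2)
     in real_of_int t0 = 64 * (u * v^3 + 3 * v^4))
  \<or> (let u = alpha powi (2*n+1) + beta powi (2*n+1);
         v = (alpha powi (2*n+1) - beta powi (2*n+1)) / (2 * sqrt 2)
     in real_of_int t0 = 4 * (u * v^3 + 3 * v^4))
  \<or> (let u = sqrt 2 * (alpha powi (2*n+1) - beta powi (2*n+1));
         v = (alpha powi (2*n+1) + beta powi (2*n+1)) / 2
     in real_of_int t0 = u * v^3 + 3 * v^4)
  \<or> (let u = sqrt 2 * (alpha powi (2*n) - beta powi (2*n));
         v = (alpha powi (2*n) + beta powi (2*n)) / 2
     in real_of_int t0 = u * v^3 + 3 * v^4)"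
proof -
  obtain m w where pell: "m^2 - 2*w^2 = 1" and t0: "4*t0 = (m - 3)*(3*m - 1 + 4*w)"
    using d2P_root_imp_pell[OF assms] by blast
  obtain \<sigma> :: int and k where \<sigma>: "\<sigma> = 1 \<or> \<sigma> = -1"
    and mw: "m + w * sqrt 2 = \<sigma> * alpha powi (2*k)" "m - w * sqrt 2 = \<sigma> * beta powi (2*k)"
    using pell_solution_eq_alpha_powi[OF pell] by blast
  obtain P Q :: int where PQ: "alpha powi (-k-1) = P + Q * sqrt 2" "beta powi (-k-1) = P - Q * sqrt 2"
    using alpha_beta_powi_coords by blast
  have "m = \<sigma> * (3*P^2 + 6*Q^2 + 8*P*Q)" "w = -\<sigma> * (2*P^2 + 4*Q^2 + 6*P*Q)"
    using pell_solution_coords[OF mw PQ] by auto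
  from pell_factor_eq_quartic[OF \<sigma> alpha_beta_coords_norm[OF PQ] this]
  have t0_PQ: "t0 = 8*P*Q^3 + 12*Q^4 \<or> t0 = 4*Q*P^3 + 3*P^4"
    unfolding t0[symmetric] by (simp only: mult_cancel_left) simp
  obtain n where "-k-1 = 2*n \<or> -k-1 = 2*n+1" by (metis evenE oddE)
  then show ?thesis
  proof
    assume "-k-1 = 2*n"
    from even_exponent_families[OF PQ[unfolded this] t0_PQ] show ?thesis by blast
  next
    assume "-k-1 = 2*n+1"
    from odd_exponent_families[OF PQ[unfolded this] t0_PQ] show ?thesis by blast
  qed
qed

end
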